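(* Let $G$ be a graph, $\ell\ge 1$, and let $B\subseteq V(G)$ be an $(\ell-1)$-edge-leaky forcing set of $G$. If $L$ is a set of $k\ge \ell$ edge leaks, then $|L- B^{[\infty]}_L|\le k-\ell$, where $L-S=\{xy\in L: x\notin S \text{ and } y\notin S\}$ for $S\subseteq V(G)$.
   Context: All graphs are finite, simple and undirected. Zero forcing: a blue vertex $u$ with exactly one white neighbor $w$ may force $w$ (color it blue), written $u\to w$. An edge leak is an edge $xy\in E(G)$ across which no force may be performed (neither $x\to y$ nor $y\to x$). $B$ is an $\ell$-edge-leaky forcing set if for every set $L$ of at most $\ell$ edge leaks, exhaustively applying the forcing rule from initial blue set $B$ without forcing across edges of $L$ colors all of $V(G)$ blue (a $0$-edge-leaky forcing set is a zero forcing set). For a set $L$ of edge leaks, $B^{[\infty]}_L$ denotes the set of blue vertices obtained from $B$ after the forcing rule (respecting the leaks $L$) has been applied exhaustively; this set does not depend on the order of forces. *)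

theory Defs
  imports Main
begin

definition simple_graph :: "'a set \<Rightarrow> 'a set set \<Rightarrow> bool" where
  "simple_graph V E \<longleftrightarrow> finite V \<and> (\<forall>e\<in>E. e \<subseteq> V \<and> card e = 2)"

inductive_set leaky_closure :: "'a set set \<Rightarrow> 'a set \<Rightarrow> 'a set set \<Rightarrow> 'a set"
  for E :: "'a set set" and B :: "'a set" and L :: "'a set set" where
  init: "b \<in> B \<Longrightarrow> b \<in> leaky_closure E B L"
| force: "\<lbrakk> u \<in> leaky_closure E B L; {u, w} \<in> E; {u, w} \<notin> L;
            \<And>v. \<lbrakk> {u, v} \<in> E; v \<noteq> w \<rbrakk> \<Longrightarrow> v \<in> leaky_closure E B L \<rbrakk>
          \<Longrightarrow> w \<in> leaky_closure E B L"

definition edge_leaky_forcing_set :: "'a set \<Rightarrow> 'a set set \<Rightarrow> nat \<Rightarrow> 'a set \<Rightarrow> bool" where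
  "edge_leaky_forcing_set V E l B \<longleftrightarrow> B \<subseteq> V \<and>
     (\<forall>L. L \<subseteq> E \<and> card L \<le> l \<longrightarrow> leaky_closure E B L = V)"

definition leaks_outside :: "'a set set \<Rightarrow> 'a set \<Rightarrow> 'a set set" where
  "leaks_outside L S = {e \<in> L. e \<inter> S = {}}"

end

theory Submission
  imports Defs
begin

text \<open>Let \<open>R\<close> be the leaks of \<open>L\<close> with no blue endpoint. No force is ever attempted
  across an edge of \<open>R\<close>, so dropping them leaves the closure unchanged. If \<open>|R| > k - l\<close>,
  the remaining set \<open>L - R\<close> has at most \<open>l - 1\<close> leaks, so the closure is all of \<open>V\<close>;
  but then no edge can avoid it, i.e. \<open>R = {}\<close>, a contradiction.\<close>

lemma leaky_closure_subset_if_extra_leaks_unreached: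
  assumes "\<And>e. e \<in> L \<Longrightarrow> e \<notin> L' \<Longrightarrow> e \<inter> leaky_closure E B L = {}"
  shows "leaky_closure E B L' \<subseteq> leaky_closure E B L"
proof
  fix x assume "x \<in> leaky_closure E B L'"
  then show "x \<in> leaky_closure E B L"
  proof (induction rule: leaky_closure.induct)
    case (init b)
    then show ?case by (rule leaky_closure.init)
  next
    case (force u w)
    have "{u, w} \<notin> L"
      using force.hyps(3) force.IH(1) assms by blast
    moreover have "\<And>v. {u, v} \<in> E \<Longrightarrow> v \<noteq> w \<Longrightarrow> v \<in> leaky_closure E B L"
      using force.IH(2) by blast
    ultimately show ?case
      using leaky_closure.force[of u E B L w] force.IH(1) force.hyps(2) by blast
  qed
qed

lemma leaky_closure_without_outside_leaks:
  "leaky_closure E B (L - leaks_outside L (leaky_closure E B L)) \<subseteq> leaky_closure E B L"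
  by (rule leaky_closure_subset_if_extra_leaks_unreached) (auto simp: leaks_outside_def)

lemma leaks_outside_spanning_set:
  assumes "simple_graph V E" and "L \<subseteq> E" and "V \<subseteq> S"
  shows "leaks_outside L S = {}"
proof -
  have "e \<inter> S \<noteq> {}" if "e \<in> L" for e
  proof -
    have "e \<subseteq> V" "card e = 2"
      using that assms(1,2) unfolding simple_graph_def by auto
    then have "e \<noteq> {}" by auto
    with \<open>e \<subseteq> V\<close> show ?thesis using assms(3) by blast
  qed
  then show ?thesis unfolding leaks_outside_def by blast
qed

theorem lemma2p2:
  fixes V :: "'a set" and E :: "'a set set" and B :: "'a set" and L :: "'a set set"
    and l k :: nat
  assumes "simple_graph V E"
    and "l \<ge> 1"
    and "edge_leaky_forcing_set V E (l - 1) B"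
    and "L \<subseteq> E" and "card L = k" and "k \<ge> l"
  shows "card (leaks_outside L (leaky_closure E B L)) \<le> k - l"
proof (rule ccontr)
  define R where "R = leaks_outside L (leaky_closure E B L)"
  assume "\<not> card R \<le> k - l"
  moreover have "finite L" using assms(2,5,6) card.infinite by fastforce
  moreover have "R \<subseteq> L" unfolding R_def leaks_outside_def by auto
  ultimately have "card (L - R) \<le> l - 1"
    using card_Diff_subset[of R L] finite_subset assms(5) by fastforce
  then have "leaky_closure E B (L - R) = V"
    using assms(3,4) unfolding edge_leaky_forcing_set_def by blast
  then have "V \<subseteq> leaky_closure E B L"
    using leaky_closure_without_outside_leaks[of E B L] unfolding R_def by simp
  then have "R = {}"
    unfolding R_def using leaks_outside_spanning_set assms(1,4) by blast
  with \<open>\<not> card R \<le> k - l\<close> show False by simp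
qed

end
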